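(* Let $D$ be a division ring and $R$ a maximal subring of $D$ which is a left duo ring. Then $R$ is a duo ring, and either $R$ is a division ring or $R$ is an Ore $G$-domain with exactly one nonzero prime ideal, namely $M=R\setminus U(R)$. Moreover, if $R$ is not a division ring, then $R$ is a valuation ring for $D$ (for each $x\in D^*$, $x\in R$ or $x^{-1}\in R$), $Max_l(R)=Max_r(R)=Max(R)=Spec(R)\setminus\{0\}=\{M\}$, and $dRd^{-1}=R$ and $dMd^{-1}=M$ for every $d\in D^*$.
   Context: All rings are associative unital and subrings share the identity. A maximal subring of a ring $T$ is a proper subring maximal under inclusion among proper subrings of $T$. A ring is left (right) duo if every left (right) ideal is two-sided; duo means both. $U(R)$ is the unit group, $D^*=D\setminus\{0\}$; $Max_l(R)$, $Max_r(R)$, $Max(R)$, $Spec(R)$ denote the sets of maximal left ideals, maximal right ideals, maximal ideals, and prime ideals. A $G$-domain is a domain in which the intersection of all nonzero prime ideals is nonzero. *)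

theory Defs
  imports Main
begin

text \<open>All notions are relative to a subset R of a ring whose carrier is the whole type
  (here: a division ring D, given as the type 'a :: division_ring).\<close>

definition subring :: "'a::ring_1 set \<Rightarrow> bool" where
  "subring R \<longleftrightarrow> 1 \<in> R \<and> (\<forall>x\<in>R. \<forall>y\<in>R. x - y \<in> R \<and> x * y \<in> R)"

definition maximal_subring :: "'a::ring_1 set \<Rightarrow> bool" where
  "maximal_subring R \<longleftrightarrow> subring R \<and> R \<noteq> UNIV \<and>
     (\<forall>S. subring S \<and> R \<subseteq> S \<and> S \<noteq> UNIV \<longrightarrow> S = R)"

definition left_ideal_of :: "'a::ring_1 set \<Rightarrow> 'a set \<Rightarrow> bool" where
  "left_ideal_of R I \<longleftrightarrow> I \<subseteq> R \<and> 0 \<in> I \<and> (\<forall>x\<in>I. \<forall>y\<in>I. x - y \<in> I) \<and>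
     (\<forall>r\<in>R. \<forall>x\<in>I. r * x \<in> I)"

definition right_ideal_of :: "'a::ring_1 set \<Rightarrow> 'a set \<Rightarrow> bool" where
  "right_ideal_of R I \<longleftrightarrow> I \<subseteq> R \<and> 0 \<in> I \<and> (\<forall>x\<in>I. \<forall>y\<in>I. x - y \<in> I) \<and>
     (\<forall>r\<in>R. \<forall>x\<in>I. x * r \<in> I)"

definition ideal_of :: "'a::ring_1 set \<Rightarrow> 'a set \<Rightarrow> bool" where
  "ideal_of R I \<longleftrightarrow> left_ideal_of R I \<and> right_ideal_of R I"

definition left_duo :: "'a::ring_1 set \<Rightarrow> bool" where
  "left_duo R \<longleftrightarrow> (\<forall>I. left_ideal_of R I \<longrightarrow> ideal_of R I)"

definition right_duo :: "'a::ring_1 set \<Rightarrow> bool" where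
  "right_duo R \<longleftrightarrow> (\<forall>I. right_ideal_of R I \<longrightarrow> ideal_of R I)"

definition duo :: "'a::ring_1 set \<Rightarrow> bool" where
  "duo R \<longleftrightarrow> left_duo R \<and> right_duo R"

definition units_of_sub :: "'a::ring_1 set \<Rightarrow> 'a set" where
  "units_of_sub R = {x \<in> R. \<exists>y\<in>R. x * y = 1 \<and> y * x = 1}"

definition is_division_subring :: "'a::division_ring set \<Rightarrow> bool" where
  "is_division_subring R \<longleftrightarrow> subring R \<and> (\<forall>x\<in>R. x \<noteq> 0 \<longrightarrow> inverse x \<in> R)"

definition domain_sub :: "'a::ring_1 set \<Rightarrow> bool" where
  "domain_sub R \<longleftrightarrow> subring R \<and> (1::'a) \<noteq> 0 \<and>
     (\<forall>a\<in>R. \<forall>b\<in>R. a * b = 0 \<longrightarrow> a = 0 \<or> b = 0)"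

definition prime_ideal_of :: "'a::ring_1 set \<Rightarrow> 'a set \<Rightarrow> bool" where
  "prime_ideal_of R P \<longleftrightarrow> ideal_of R P \<and> P \<noteq> R \<and>
     (\<forall>a\<in>R. \<forall>b\<in>R. (\<forall>r\<in>R. a * r * b \<in> P) \<longrightarrow> a \<in> P \<or> b \<in> P)"

definition Spec_sub :: "'a::ring_1 set \<Rightarrow> 'a set set" where
  "Spec_sub R = {P. prime_ideal_of R P}"

definition Max_l :: "'a::ring_1 set \<Rightarrow> 'a set set" where
  "Max_l R = {I. left_ideal_of R I \<and> I \<noteq> R \<and>
     (\<forall>J. left_ideal_of R J \<and> J \<noteq> R \<and> I \<subseteq> J \<longrightarrow> J = I)}"

definition Max_r :: "'a::ring_1 set \<Rightarrow> 'a set set" where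
  "Max_r R = {I. right_ideal_of R I \<and> I \<noteq> R \<and>
     (\<forall>J. right_ideal_of R J \<and> J \<noteq> R \<and> I \<subseteq> J \<longrightarrow> J = I)}"

definition Max_two :: "'a::ring_1 set \<Rightarrow> 'a set set" where
  "Max_two R = {I. ideal_of R I \<and> I \<noteq> R \<and>
     (\<forall>J. ideal_of R J \<and> J \<noteq> R \<and> I \<subseteq> J \<longrightarrow> J = I)}"

definition G_domain :: "'a::ring_1 set \<Rightarrow> bool" where
  "G_domain R \<longleftrightarrow> domain_sub R \<and>
     R \<inter> \<Inter>{P. prime_ideal_of R P \<and> P \<noteq> {0}} \<noteq> {0}"

definition left_Ore :: "'a::ring_1 set \<Rightarrow> bool" where
  "left_Ore R \<longleftrightarrow> (\<forall>a\<in>R. \<forall>b\<in>R. a \<noteq> 0 \<and> b \<noteq> 0 \<longrightarrow>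
     (\<exists>r\<in>R. \<exists>s\<in>R. r * a = s * b \<and> r * a \<noteq> 0))"

definition right_Ore :: "'a::ring_1 set \<Rightarrow> bool" where
  "right_Ore R \<longleftrightarrow> (\<forall>a\<in>R. \<forall>b\<in>R. a \<noteq> 0 \<and> b \<noteq> 0 \<longrightarrow>
     (\<exists>r\<in>R. \<exists>s\<in>R. a * r = b * s \<and> a * r \<noteq> 0))"

definition Ore_domain :: "'a::ring_1 set \<Rightarrow> bool" where
  "Ore_domain R \<longleftrightarrow> domain_sub R \<and> left_Ore R \<and> right_Ore R"

definition valuation_ring_for :: "'a::division_ring set \<Rightarrow> bool" where
  "valuation_ring_for R \<longleftrightarrow> (\<forall>x. x \<noteq> 0 \<longrightarrow> x \<in> R \<or> inverse x \<in> R)"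

end

theory Submission
  imports Defs
begin

text \<open>
  Left duo means \<open>a R \<subseteq> R a\<close> for \<open>a \<in> R\<close>, i.e. \<open>a R a\<^sup>-\<^sup>1 \<subseteq> R\<close> for nonzero \<open>a \<in> R\<close>. Then
  \<open>a\<^sup>-\<^sup>1 R a\<close> is a proper subring containing \<open>R\<close>, so it equals \<open>R\<close>, and \<open>R\<close> is right duo too.

  If \<open>a \<in> R\<close> is a nonzero nonunit, the localization \<open>{x. a\<^sup>n x \<in> R for some n}\<close> is a subring
  properly containing \<open>R\<close>, hence all of \<open>D\<close>. This makes the nonunits closed under addition
  (\<open>R\<close> is local with maximal ideal \<open>M\<close>), and it writes every \<open>d \<noteq> 0\<close> as \<open>a\<^sup>-\<^sup>n b\<close> with
  \<open>b \<in> R\<close>, so every \<open>d\<close> normalizes \<open>R\<close> and \<open>M\<close>.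

  If \<open>x \<notin> R\<close> and \<open>x\<^sup>-\<^sup>1 \<notin> R\<close>, normality makes \<open>R[x]\<close> and \<open>R[x\<^sup>-\<^sup>1]\<close> rings properly containing
  \<open>R\<close>, so both are \<open>D\<close>; multiplying an expression for \<open>a\<^sup>-\<^sup>1\<close> by \<open>a\<close> gives \<open>1 \<in> M[x]\<close> and
  \<open>1 \<in> M[x\<^sup>-\<^sup>1]\<close>, which Chevalley's degree reduction rules out in a local ring. So \<open>R\<close> is a
  valuation ring. Every proper one-sided ideal lies in \<open>M\<close>, and a nonzero prime ideal \<open>P\<close>
  contains a power of each \<open>x \<in> M\<close> (as \<open>x\<^sup>n p\<^sup>-\<^sup>1 \<in> R\<close> for \<open>0 \<noteq> p \<in> P\<close>), hence \<open>x\<close> itself.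
\<close>

lemma subring_one: "subring R \<Longrightarrow> 1 \<in> R"
  by (simp add: subring_def)

lemma subring_diff: "subring R \<Longrightarrow> x \<in> R \<Longrightarrow> y \<in> R \<Longrightarrow> x - y \<in> R"
  by (simp add: subring_def)

lemma subring_mult: "subring R \<Longrightarrow> x \<in> R \<Longrightarrow> y \<in> R \<Longrightarrow> x * y \<in> R"
  by (simp add: subring_def)

lemma subring_zero: "subring R \<Longrightarrow> 0 \<in> R"
  by (metis subring_one subring_diff diff_self)

lemma subring_uminus: "subring R \<Longrightarrow> x \<in> R \<Longrightarrow> - x \<in> R"
  by (metis subring_zero subring_diff diff_0)

lemma subring_add: "subring R \<Longrightarrow> x \<in> R \<Longrightarrow> y \<in> R \<Longrightarrow> x + y \<in> R"
  by (metis subring_uminus subring_diff diff_minus_eq_add)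

lemma subring_power: "subring R \<Longrightarrow> x \<in> R \<Longrightarrow> x ^ n \<in> R"
  by (induction n) (auto simp: subring_one subring_mult)

lemma maximal_subring_subring: "maximal_subring R \<Longrightarrow> subring R"
  by (simp add: maximal_subring_def)

lemma maximal_subringD: "maximal_subring R \<Longrightarrow> subring S \<Longrightarrow> R \<subseteq> S \<Longrightarrow> S \<noteq> UNIV \<Longrightarrow> S = R"
  by (simp add: maximal_subring_def)

lemma inverse_mult_cancel_left: "x \<noteq> 0 \<Longrightarrow> inverse x * (x * y) = (y::'a::division_ring)"
  by (simp flip: mult.assoc)

lemma mult_inverse_cancel_left: "x \<noteq> 0 \<Longrightarrow> x * (inverse x * y) = (y::'a::division_ring)"
  by (simp flip: mult.assoc)

lemma one_minus_power_eq:
  fixes y :: "'a::ring_1"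
  assumes sub: "subring R" and y: "y \<in> R"
  shows "\<exists>q\<in>R. (1 - y) ^ n = 1 - q * y"
proof (induction n)
  case 0 then show ?case using subring_zero[OF sub] by force
next
  case (Suc n)
  then obtain q where q: "q \<in> R" "(1 - y) ^ n = 1 - q * y" by blast
  have "(1 - y) ^ Suc n = (1 - y) * (1 - q * y)"
    using q(2) by (simp only: power_Suc)
  also have "\<dots> = 1 - (q + 1 - y * q) * y"
    by (simp add: algebra_simps)
  finally have "(1 - y) ^ Suc n = 1 - (q + 1 - y * q) * y" .
  moreover have "q + 1 - y * q \<in> R"
    by (meson q(1) y sub subring_add subring_diff subring_mult subring_one)
  ultimately show ?case by blast
qed

definition nonunits :: "'a::division_ring set \<Rightarrow> 'a set" where
  "nonunits R = {x\<in>R. x = 0 \<or> inverse x \<notin> R}"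

lemma Diff_units_of_sub:
  fixes R :: "'a::division_ring set"
  shows "R - units_of_sub R = nonunits R"
proof -
  have "(\<exists>y\<in>R. x * y = 1 \<and> y * x = 1) \<longleftrightarrow> x \<noteq> 0 \<and> inverse x \<in> R" for x :: 'a
    by (metis inverse_unique mult_zero_left right_inverse left_inverse zero_neq_one)
  then show ?thesis by (auto simp: units_of_sub_def nonunits_def)
qed

lemma nonunits_subset: "nonunits R \<subseteq> R"
  by (auto simp: nonunits_def)

lemma zero_mem_nonunits: "subring R \<Longrightarrow> 0 \<in> nonunits R"
  by (simp add: nonunits_def subring_zero)

lemma one_not_mem_nonunits: "1 \<notin> nonunits R"
  by (simp add: nonunits_def)

lemma nonunits_mult_left:
  fixes R :: "'a::division_ring set"
  assumes sub: "subring R" and r: "r \<in> R" and x: "x \<in> nonunits R"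
  shows "r * x \<in> nonunits R"
proof (rule ccontr)
  assume "r * x \<notin> nonunits R"
  moreover have "r * x \<in> R" using subring_mult[OF sub r] x by (simp add: nonunits_def)
  ultimately have "r * x \<noteq> 0" and inv: "inverse (r * x) \<in> R" by (auto simp: nonunits_def)
  then have "inverse x = inverse (r * x) * r"
    by (simp add: nonzero_inverse_mult_distrib mult.assoc)
  then have "inverse x \<in> R" using subring_mult[OF sub inv r] by simp
  then show False using x \<open>r * x \<noteq> 0\<close> by (simp add: nonunits_def)
qed

lemma nonunits_mult_right:
  fixes R :: "'a::division_ring set"
  assumes sub: "subring R" and r: "r \<in> R" and x: "x \<in> nonunits R"
  shows "x * r \<in> nonunits R"
proof (rule ccontr)
  assume "x * r \<notin> nonunits R"
  moreover have "x * r \<in> R" using subring_mult[OF sub _ r] x by (simp add: nonunits_def)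
  ultimately have "x * r \<noteq> 0" and inv: "inverse (x * r) \<in> R" by (auto simp: nonunits_def)
  then have "inverse x = r * inverse (x * r)"
    by (simp add: nonzero_inverse_mult_distrib mult.assoc[symmetric])
  then have "inverse x \<in> R" using subring_mult[OF sub r inv] by simp
  then show False using x \<open>x * r \<noteq> 0\<close> by (simp add: nonunits_def)
qed

lemma nonunits_uminus:
  fixes R :: "'a::division_ring set"
  shows "subring R \<Longrightarrow> x \<in> nonunits R \<Longrightarrow> - x \<in> nonunits R"
  by (auto simp: nonunits_def subring_uminus) (metis inverse_minus_eq minus_minus subring_uminus)

lemma left_ideal_subset_nonunits:
  fixes R :: "'a::division_ring set"
  assumes sub: "subring R" and I: "left_ideal_of R I" and IR: "I \<noteq> R"
  shows "I \<subseteq> nonunits R"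
proof
  fix x assume x: "x \<in> I"
  show "x \<in> nonunits R"
  proof (rule ccontr)
    assume "x \<notin> nonunits R"
    then have x0: "x \<noteq> 0" and xi: "inverse x \<in> R" using I x by (auto simp: left_ideal_of_def nonunits_def)
    have "r \<in> I" if r: "r \<in> R" for r
    proof -
      have "(r * inverse x) * x \<in> I"
        using I x subring_mult[OF sub r xi] unfolding left_ideal_of_def by blast
      then show "r \<in> I" using x0 by (simp add: mult.assoc)
    qed
    then show False using I IR unfolding left_ideal_of_def by auto
  qed
qed

lemma right_ideal_subset_nonunits:
  fixes R :: "'a::division_ring set"
  assumes sub: "subring R" and I: "right_ideal_of R I" and IR: "I \<noteq> R"
  shows "I \<subseteq> nonunits R"
proof
  fix x assume x: "x \<in> I"
  show "x \<in> nonunits R"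
  proof (rule ccontr)
    assume "x \<notin> nonunits R"
    then have x0: "x \<noteq> 0" and xi: "inverse x \<in> R" using I x by (auto simp: right_ideal_of_def nonunits_def)
    have "r \<in> I" if r: "r \<in> R" for r
    proof -
      have "x * (inverse x * r) \<in> I"
        using I x subring_mult[OF sub xi r] unfolding right_ideal_of_def by blast
      then show "r \<in> I" using x0 by (simp add: mult.assoc[symmetric])
    qed
    then show False using I IR unfolding right_ideal_of_def by auto
  qed
qed

lemma Max_l_eq_singleton:
  assumes "left_ideal_of R M" "M \<noteq> R" "\<And>I. left_ideal_of R I \<Longrightarrow> I \<noteq> R \<Longrightarrow> I \<subseteq> M"
  shows "Max_l R = {M}"
  using assms unfolding Max_l_def by blast

lemma Max_r_eq_singleton:
  assumes "right_ideal_of R M" "M \<noteq> R" "\<And>I. right_ideal_of R I \<Longrightarrow> I \<noteq> R \<Longrightarrow> I \<subseteq> M"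
  shows "Max_r R = {M}"
  using assms unfolding Max_r_def by blast

lemma Max_two_eq_singleton:
  assumes "ideal_of R M" "M \<noteq> R" "\<And>I. ideal_of R I \<Longrightarrow> I \<noteq> R \<Longrightarrow> I \<subseteq> M"
  shows "Max_two R = {M}"
  using assms unfolding Max_two_def by blast

lemma left_duo_mult_commute:
  fixes R :: "'a::ring_1 set"
  assumes sub: "subring R" and ld: "left_duo R" and a: "a \<in> R" and z: "z \<in> R"
  shows "\<exists>z'\<in>R. a * z = z' * a"
proof -
  let ?Ra = "{r * a | r. r \<in> R}"
  have "left_ideal_of R ?Ra" unfolding left_ideal_of_def
  proof (intro conjI ballI)
    show "?Ra \<subseteq> R" using sub a subring_mult by blast
    show "0 \<in> ?Ra" using subring_zero[OF sub] by force
  next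
    fix x y assume "x \<in> ?Ra" "y \<in> ?Ra"
    then obtain r s where "r \<in> R" "s \<in> R" "x = r * a" "y = s * a" by blast
    then show "x - y \<in> ?Ra"
      using subring_diff[OF sub] by (auto simp: left_diff_distrib intro!: exI[of _ "r - s"])
  next
    fix t x assume "t \<in> R" "x \<in> ?Ra"
    then obtain r where "r \<in> R" "x = r * a" by blast
    then show "t * x \<in> ?Ra"
      using subring_mult[OF sub \<open>t \<in> R\<close>] by (auto simp: mult.assoc intro!: exI[of _ "t * r"])
  qed
  then have "right_ideal_of R ?Ra" using ld unfolding left_duo_def ideal_of_def by blast
  moreover have "a \<in> ?Ra" using subring_one[OF sub] by force
  ultimately have "a * z \<in> ?Ra" using z unfolding right_ideal_of_def by blast
  then show ?thesis by blast
qed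

lemma power_mult_commute:
  fixes x :: "'a::ring_1"
  assumes "\<forall>t\<in>R. \<exists>t'\<in>R. x * t = t' * x"
  shows "\<forall>t\<in>R. \<exists>t'\<in>R. x ^ n * t = t' * x ^ n"
proof (induction n)
  case (Suc n)
  show ?case
  proof
    fix t assume "t \<in> R"
    then obtain t1 where t1: "t1 \<in> R" "x ^ n * t = t1 * x ^ n" using Suc by blast
    then obtain t2 where t2: "t2 \<in> R" "x * t1 = t2 * x" using assms by blast
    have "x ^ Suc n * t = x * (x ^ n * t)" by (simp add: mult.assoc)
    also have "\<dots> = t2 * x ^ Suc n" using t1 t2 by (simp add: mult.assoc[symmetric])
    finally show "\<exists>t'\<in>R. x ^ Suc n * t = t' * x ^ Suc n" using t2 by blast
  qed
qed simp

lemma right_duoI: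
  fixes R :: "'a::division_ring set"
  assumes sub: "subring R"
    and conj: "\<And>x r. x \<in> R \<Longrightarrow> x \<noteq> 0 \<Longrightarrow> r \<in> R \<Longrightarrow> inverse x * r * x \<in> R"
  shows "right_duo R"
  unfolding right_duo_def ideal_of_def
proof (intro allI impI conjI)
  fix I assume I: "right_ideal_of R I"
  then show "right_ideal_of R I" .
  have "r * x \<in> I" if r: "r \<in> R" and x: "x \<in> I" for r x
  proof (cases "x = 0")
    case True
    then show ?thesis using I by (simp add: right_ideal_of_def)
  next
    case False
    have "x \<in> R" using I x by (auto simp: right_ideal_of_def)
    then have "x * (inverse x * r * x) \<in> I"
      using I x conj[OF _ False r] unfolding right_ideal_of_def by blast
    then show ?thesis using False by (simp add: mult.assoc[symmetric])
  qed
  then show "left_ideal_of R I"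
    using I unfolding right_ideal_of_def left_ideal_of_def by blast
qed

lemma conjugation_image_eq:
  fixes d :: "'a::division_ring"
  assumes d: "d \<noteq> 0" and "\<And>t. t \<in> S \<Longrightarrow> d * t * inverse d \<in> S"
    and "\<And>t. t \<in> S \<Longrightarrow> inverse d * t * d \<in> S"
  shows "(\<lambda>x. d * x * inverse d) ` S = S"
proof
  show "(\<lambda>x. d * x * inverse d) ` S \<subseteq> S" using assms(2) by blast
  show "S \<subseteq> (\<lambda>x. d * x * inverse d) ` S"
  proof
    fix t assume "t \<in> S"
    have "d * (inverse d * t * d) * inverse d = (d * inverse d) * t * (d * inverse d)"
      by (simp only: mult.assoc)
    then have "t = d * (inverse d * t * d) * inverse d" using d by simp
    then show "t \<in> (\<lambda>x. d * x * inverse d) ` S" using assms(3)[OF \<open>t \<in> S\<close>] by blast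
  qed
qed

lemma valuation_ring_left_Ore:
  fixes R :: "'a::division_ring set"
  assumes sub: "subring R" and val: "valuation_ring_for R"
  shows "left_Ore R"
  unfolding left_Ore_def
proof (intro ballI impI)
  fix x y assume "x \<in> R" "y \<in> R" and nz: "x \<noteq> 0 \<and> y \<noteq> 0"
  have "x * inverse y \<noteq> 0" "inverse (x * inverse y) = y * inverse x"
    using nz by (simp_all add: nonzero_inverse_mult_distrib)
  then have "x * inverse y \<in> R \<or> y * inverse x \<in> R"
    using val unfolding valuation_ring_for_def by metis
  moreover have "1 * x = (x * inverse y) * y" "(y * inverse x) * x = 1 * y"
    using nz by (simp_all add: mult.assoc)
  ultimately show "\<exists>r\<in>R. \<exists>s\<in>R. r * x = s * y \<and> r * x \<noteq> 0"
    using subring_one[OF sub] nz by (metis mult_1_left)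
qed

lemma valuation_ring_right_Ore:
  fixes R :: "'a::division_ring set"
  assumes sub: "subring R" and val: "valuation_ring_for R"
  shows "right_Ore R"
  unfolding right_Ore_def
proof (intro ballI impI)
  fix x y assume "x \<in> R" "y \<in> R" and nz: "x \<noteq> 0 \<and> y \<noteq> 0"
  have "inverse x * y \<noteq> 0" "inverse (inverse x * y) = inverse y * x"
    using nz by (simp_all add: nonzero_inverse_mult_distrib)
  then have "inverse x * y \<in> R \<or> inverse y * x \<in> R"
    using val unfolding valuation_ring_for_def by metis
  moreover have "x * (inverse x * y) = y * 1" "x * 1 = y * (inverse y * x)"
    using nz by (simp_all add: mult_inverse_cancel_left)
  ultimately show "\<exists>r\<in>R. \<exists>s\<in>R. x * r = y * s \<and> x * r \<noteq> 0"
    using subring_one[OF sub] nz by (metis mult_1_right)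
qed

section \<open>Polynomial expressions over a subring\<close>

definition polys_upto :: "'a::ring_1 set \<Rightarrow> 'a \<Rightarrow> nat \<Rightarrow> 'a set" where
  "polys_upto S x n = {y. \<exists>c. (\<forall>i. c i \<in> S) \<and> y = (\<Sum>i\<le>n. c i * x ^ i)}"

definition polys :: "'a::ring_1 set \<Rightarrow> 'a \<Rightarrow> 'a set" where
  "polys S x = {y. \<exists>n. y \<in> polys_upto S x n}"

lemma polys_uptoI: "\<forall>i. c i \<in> S \<Longrightarrow> (\<Sum>i\<le>n. c i * x ^ i) \<in> polys_upto S x n"
  unfolding polys_upto_def by blast

lemma polys_upto_monom:
  assumes "0 \<in> S" "m \<in> S" "i \<le> n"
  shows "m * x ^ i \<in> polys_upto S x n"
proof -
  have "(\<Sum>j\<le>n. (if j = i then m else 0) * x ^ j) = (\<Sum>j\<le>n. if j = i then m * x ^ j else 0)"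
    by (rule sum.cong) auto
  also have "\<dots> = m * x ^ i" using assms(3) by (subst sum.delta) auto
  finally have "(\<Sum>j\<le>n. (if j = i then m else 0) * x ^ j) = m * x ^ i" .
  moreover have "(\<Sum>j\<le>n. (if j = i then m else 0) * x ^ j) \<in> polys_upto S x n"
    by (rule polys_uptoI) (use assms in auto)
  ultimately show ?thesis by simp
qed

lemma polys_upto_add:
  assumes "\<forall>a\<in>S. \<forall>b\<in>S. a + b \<in> S" "y \<in> polys_upto S x n" "z \<in> polys_upto S x n"
  shows "y + z \<in> polys_upto S x n"
proof -
  obtain c where c: "\<forall>i. c i \<in> S" "y = (\<Sum>i\<le>n. c i * x ^ i)"
    using assms(2) unfolding polys_upto_def by blast
  obtain e where e: "\<forall>i. e i \<in> S" "z = (\<Sum>i\<le>n. e i * x ^ i)"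
    using assms(3) unfolding polys_upto_def by blast
  have "y + z = (\<Sum>i\<le>n. (c i + e i) * x ^ i)"
    using c e by (simp add: sum.distrib distrib_right)
  moreover have "(\<Sum>i\<le>n. (c i + e i) * x ^ i) \<in> polys_upto S x n"
    by (rule polys_uptoI) (use c(1) e(1) assms(1) in auto)
  ultimately show ?thesis by simp
qed

lemma polys_upto_sum:
  assumes "0 \<in> S" "\<forall>a\<in>S. \<forall>b\<in>S. a + b \<in> S" "\<And>j. j \<in> A \<Longrightarrow> f j \<in> polys_upto S x n"
  shows "sum f A \<in> polys_upto S x n"
  using assms(3)
proof (induction A rule: infinite_finite_induct)
  case (insert j A)
  then have "f j + sum f A \<in> polys_upto S x n"
    by (intro polys_upto_add[OF assms(2)]) auto
  then show ?case using insert.hyps by simp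
qed (use polys_upto_monom[OF assms(1,1) le0, of x] in simp_all)

lemma polys_upto_mult_left:
  assumes "\<forall>m\<in>S. r * m \<in> S'" "y \<in> polys_upto S x n"
  shows "r * y \<in> polys_upto S' x n"
proof -
  obtain c where c: "\<forall>i. c i \<in> S" "y = (\<Sum>i\<le>n. c i * x ^ i)"
    using assms(2) unfolding polys_upto_def by blast
  have "r * y = (\<Sum>i\<le>n. (r * c i) * x ^ i)"
    using c by (simp add: sum_distrib_left mult.assoc)
  moreover have "(\<Sum>i\<le>n. (r * c i) * x ^ i) \<in> polys_upto S' x n"
    by (rule polys_uptoI) (use c(1) assms(1) in auto)
  ultimately show ?thesis by simp
qed

lemma polys_upto_mono:
  assumes "0 \<in> S" "n \<le> m" "y \<in> polys_upto S x n"
  shows "y \<in> polys_upto S x m"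
proof -
  obtain c where c: "\<forall>i. c i \<in> S" "y = (\<Sum>i\<le>n. c i * x ^ i)"
    using assms(3) unfolding polys_upto_def by blast
  have "(\<Sum>i\<le>m. (if i \<in> {..n} then c i else 0) * x ^ i) = (\<Sum>i\<le>m. if i \<in> {..n} then c i * x ^ i else 0)"
    by (rule sum.cong) auto
  also have "\<dots> = (\<Sum>i\<in>{..m} \<inter> {..n}. c i * x ^ i)"
    by (rule sum.inter_restrict[symmetric]) simp
  also have "{..m} \<inter> {..n} = {..n}" using assms(2) by auto
  finally have "y = (\<Sum>i\<le>m. (if i \<in> {..n} then c i else 0) * x ^ i)" using c(2) by simp
  moreover have "(\<Sum>i\<le>m. (if i \<in> {..n} then c i else 0) * x ^ i) \<in> polys_upto S x m"
    by (rule polys_uptoI) (use assms(1) c(1) in auto)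
  ultimately show ?thesis by simp
qed

lemma mem_polys: "y \<in> polys S x \<longleftrightarrow> (\<exists>n. y \<in> polys_upto S x n)"
  by (simp add: polys_def)

lemma polys_subring:
  fixes R :: "'a::ring_1 set"
  assumes sub: "subring R" and comm: "\<forall>t\<in>R. \<exists>t'\<in>R. x * t = t' * x"
  shows "subring (polys R x)"
  unfolding subring_def
proof (intro conjI ballI)
  have zero: "0 \<in> R" and add: "\<forall>a\<in>R. \<forall>b\<in>R. a + b \<in> R"
    using sub by (auto simp: subring_zero subring_add)
  show "1 \<in> polys R x"
    using polys_upto_monom[OF zero subring_one[OF sub] le0, of x] by (auto simp: mem_polys)
  fix y z assume "y \<in> polys R x" "z \<in> polys R x"
  then obtain n m where y: "y \<in> polys_upto R x n" and z: "z \<in> polys_upto R x m"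
    by (auto simp: mem_polys)
  have "y \<in> polys_upto R x (n + m)" "(-1) * z \<in> polys_upto R x (n + m)"
    using polys_upto_mono[OF zero _ y] polys_upto_mono[OF zero _ z]
      polys_upto_mult_left[of R "-1" R] subring_uminus[OF sub] by auto
  then show "y - z \<in> polys R x"
    using polys_upto_add[OF add] by (fastforce simp: mem_polys)
  obtain c where c: "\<forall>i. c i \<in> R" "y = (\<Sum>i\<le>n. c i * x ^ i)"
    using y unfolding polys_upto_def by blast
  obtain e where e: "\<forall>j. e j \<in> R" "z = (\<Sum>j\<le>m. e j * x ^ j)"
    using z unfolding polys_upto_def by blast
  have "c i * x ^ i * (e j * x ^ j) \<in> polys_upto R x (n + m)" if "i \<le> n" "j \<le> m" for i j
  proof -
    obtain t where t: "t \<in> R" "x ^ i * e j = t * x ^ i"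
      using power_mult_commute[OF comm] e(1) by blast
    have "c i * x ^ i * (e j * x ^ j) = c i * (x ^ i * e j) * x ^ j"
      by (simp only: mult.assoc)
    also have "\<dots> = (c i * t) * x ^ (i + j)"
      by (simp only: t(2) mult.assoc power_add)
    finally have "c i * x ^ i * (e j * x ^ j) = (c i * t) * x ^ (i + j)" .
    moreover have "(c i * t) * x ^ (i + j) \<in> polys_upto R x (n + m)"
      using that c(1) t(1) subring_mult[OF sub] by (intro polys_upto_monom[OF zero]) auto
    ultimately show ?thesis by simp
  qed
  then have "(\<Sum>i\<le>n. \<Sum>j\<le>m. c i * x ^ i * (e j * x ^ j)) \<in> polys_upto R x (n + m)"
    by (intro polys_upto_sum[OF zero add]) auto
  then show "y * z \<in> polys R x"
    unfolding c(2) e(2) sum_product mem_polys by blast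
qed

section \<open>Chevalley's lemma for a local subring\<close>

lemma conjugate_power_mem:
  fixes d :: "'a::division_ring"
  assumes "\<forall>m\<in>M. d * m * inverse d \<in> M"
  shows "\<forall>m\<in>M. d ^ k * m * inverse d ^ k \<in> M"
proof (induction k)
  case (Suc k)
  have "d ^ Suc k * m * inverse d ^ Suc k = d * (d ^ k * m * inverse d ^ k) * inverse d" for m
    by (simp only: power_Suc2[of "inverse d" k] power_Suc[of d k] mult.assoc)
  then show ?case using Suc assms by simp
qed simp

lemma conjugate_power_mult_power:
  fixes d :: "'a::division_ring"
  assumes "d \<noteq> 0" "j \<le> n"
  shows "d ^ n * (f * inverse d ^ j) = (d ^ n * f * inverse d ^ n) * d ^ (n - j)"
proof -
  have "(d ^ n * f * inverse d ^ n) * d ^ (n - j)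
      = d ^ n * f * (inverse d ^ n * d ^ n) * inverse d ^ j"
    using assms by (simp add: power_diff_conv_inverse mult.assoc)
  also have "\<dots> = d ^ n * (f * inverse d ^ j)"
    using assms(1) by (simp add: power_inverse mult.assoc)
  finally show ?thesis by simp
qed

locale local_ideal =
  fixes R M :: "'a::division_ring set"
  assumes subring: "subring R" and subset: "M \<subseteq> R" and zero: "0 \<in> M" and one: "1 \<notin> M"
    and add: "x \<in> M \<Longrightarrow> y \<in> M \<Longrightarrow> x + y \<in> M"
    and mult_left: "r \<in> R \<Longrightarrow> m \<in> M \<Longrightarrow> r * m \<in> M"
    and inverse_mem: "u \<in> R \<Longrightarrow> u \<notin> M \<Longrightarrow> inverse u \<in> R"
begin

lemma one_not_mem_polys_upto_0: "1 \<notin> polys_upto M x 0"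
  using one by (auto simp: polys_upto_def) metis

lemma inverse_mem_polys_upto:
  assumes x: "x \<noteq> 0" and one_mem: "1 \<in> polys_upto M x (Suc k)"
  shows "inverse x \<in> polys_upto M x k"
proof -
  obtain e where e: "\<forall>i. e i \<in> M" "1 = (\<Sum>i\<le>Suc k. e i * x ^ i)"
    using one_mem unfolding polys_upto_def by blast
  define y where "y = (\<Sum>i\<le>k. e (Suc i) * x ^ i)"
  have "(\<Sum>i\<le>Suc k. e i * x ^ i) = e 0 + y * x"
    unfolding y_def sum.atMost_Suc_shift
    by (simp add: sum_distrib_right mult.assoc power_commutes)
  then have u: "1 - e 0 = y * x" using e(2) by (simp add: algebra_simps)
  have "1 - e 0 \<in> R" using subring subset e(1) by (blast intro: subring_diff subring_one)
  moreover have "1 - e 0 \<notin> M" using add[of "1 - e 0" "e 0"] e(1) one by auto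
  ultimately have w: "inverse (1 - e 0) \<in> R" by (rule inverse_mem)
  have "1 - e 0 \<noteq> 0" using \<open>1 - e 0 \<notin> M\<close> zero by auto
  then have "(inverse (1 - e 0) * y) * x = 1"
    using u by (simp add: mult.assoc)
  then have "inverse (1 - e 0) * y = inverse x"
    by (metis inverse_inverse_eq inverse_unique)
  moreover have "inverse (1 - e 0) * y \<in> polys_upto M x k"
    unfolding y_def
    by (rule polys_upto_mult_left[of M _ M, OF _ polys_uptoI]) (use w e(1) mult_left in auto)
  ultimately show ?thesis by simp
qed

lemma one_mem_polys_upto_lower_degree:
  assumes d: "d \<noteq> 0" and conj: "\<forall>m\<in>M. d * m * inverse d \<in> M"
    and one_mem: "1 \<in> polys_upto M d (Suc n)" and d_mem: "d \<in> polys_upto M (inverse d) k"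
    and "k \<le> n"
  shows "1 \<in> polys_upto M d n"
proof -
  have add': "\<forall>x\<in>M. \<forall>y\<in>M. x + y \<in> M" using add by blast
  obtain c where c: "\<forall>i. c i \<in> M" "1 = (\<Sum>i\<le>Suc n. c i * d ^ i)"
    using one_mem unfolding polys_upto_def by blast
  obtain f where f: "\<forall>j. f j \<in> M" "d = (\<Sum>j\<le>k. f j * inverse d ^ j)"
    using d_mem unfolding polys_upto_def by blast
  \<comment> \<open>expand the top term \<open>c\<^sub>n\<^sub>+\<^sub>1 d\<^sup>n d\<close> using \<open>d = \<Sum>f\<^sub>j d\<^sup>-\<^sup>j\<close>, moving \<open>f\<^sub>j\<close> past \<open>d\<^sup>n\<close> by conjugation\<close>
  define g where "g j = c (Suc n) * (d ^ n * f j * inverse d ^ n)" for j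
  have g: "g j \<in> M" for j
    using conjugate_power_mem[OF conj] f(1) c(1) subset mult_left unfolding g_def by blast
  have "c (Suc n) * d ^ Suc n = c (Suc n) * (d ^ n * (\<Sum>j\<le>k. f j * inverse d ^ j))"
    by (simp only: power_Suc2 f(2)[symmetric])
  also have "\<dots> = (\<Sum>j\<le>k. g j * d ^ (n - j))"
    using conjugate_power_mult_power[OF d] \<open>k \<le> n\<close>
    unfolding g_def sum_distrib_left by (intro sum.cong) (simp_all add: mult.assoc)
  finally have top: "c (Suc n) * d ^ Suc n = (\<Sum>j\<le>k. g j * d ^ (n - j))" .
  have "(\<Sum>j\<le>k. g j * d ^ (n - j)) \<in> polys_upto M d n"
    using g by (intro polys_upto_sum[OF zero add'] polys_upto_monom[OF zero]) auto
  moreover have "(\<Sum>i\<le>n. c i * d ^ i) \<in> polys_upto M d n"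
    using c(1) by (rule polys_uptoI)
  moreover have "1 = (\<Sum>i\<le>n. c i * d ^ i) + c (Suc n) * d ^ Suc n"
    using c(2) by simp
  ultimately show ?thesis using polys_upto_add[OF add'] top by metis
qed

theorem not_one_mem_polys_upto_both:
  assumes "d \<noteq> 0" "\<forall>m\<in>M. d * m * inverse d \<in> M" "\<forall>m\<in>M. inverse d * m * d \<in> M"
    and "1 \<in> polys_upto M d n"
  shows "1 \<notin> polys_upto M (inverse d) k"
  using assms
proof (induction "n + k" arbitrary: d n k rule: less_induct)
  \<comment> \<open>the larger of the two degrees can always be lowered\<close>
  case less
  show ?case
  proof
    assume one_inv: "1 \<in> polys_upto M (inverse d) k"
    obtain n' k' where n': "n = Suc n'" and k': "k = Suc k'"
      using one_inv less.prems(4) one_not_mem_polys_upto_0 by (metis not0_implies_Suc)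
    have inv_d: "inverse d \<noteq> 0" "\<forall>m\<in>M. inverse d * m * inverse (inverse d) \<in> M"
      using less.prems by simp_all
    show False
    proof (cases "k \<le> n")
      case True
      have "d \<in> polys_upto M (inverse d) k'"
        using inverse_mem_polys_upto[OF inv_d(1)] one_inv k' by simp
      then have "1 \<in> polys_upto M d n'"
        using one_mem_polys_upto_lower_degree less.prems True n' k' by simp
      then show False using less.hyps[of n' k d] less.prems one_inv n' by simp
    next
      case False
      have "inverse d \<in> polys_upto M d n'"
        using inverse_mem_polys_upto[OF less.prems(1)] less.prems(4) n' by simp
      then have "1 \<in> polys_upto M (inverse d) k'"
        using one_mem_polys_upto_lower_degree[OF inv_d] one_inv False n' k' by simp
      then show False using less.hyps[of k' n "inverse d"] less.prems k' by simp
    qed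
  qed
qed

end

locale maximal_left_duo =
  fixes R :: "'a::division_ring set"
  assumes maximal: "maximal_subring R" and left_duo: "left_duo R"
begin

lemma subring: "subring R"
  using maximal by (rule maximal_subring_subring)

lemma conjugate_by_mem:
  assumes "x \<in> R" "x \<noteq> 0" "t \<in> R"
  shows "x * t * inverse x \<in> R"
proof -
  obtain t' where "t' \<in> R" "x * t = t' * x"
    using left_duo_mult_commute[OF subring left_duo assms(1,3)] by blast
  then show ?thesis using assms(2) by (simp add: mult.assoc)
qed

lemma inverse_conjugate_by_mem:
  assumes x: "x \<in> R" "x \<noteq> 0" and t: "t \<in> R"
  shows "inverse x * t * x \<in> R"
proof -
  \<comment> \<open>\<open>?S = x\<^sup>-\<^sup>1 R x\<close> is a proper subring containing \<open>R\<close>, so it is \<open>R\<close>.\<close>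
  let ?S = "{y. x * y * inverse x \<in> R}"
  have "subring ?S"
    unfolding subring_def
  proof (intro conjI ballI)
    show "1 \<in> ?S" using x(2) subring_one[OF subring] by simp
    fix y z assume "y \<in> ?S" "z \<in> ?S"
    then have y: "x * y * inverse x \<in> R" and z: "x * z * inverse x \<in> R" by simp_all
    have "x * (y - z) * inverse x = x * y * inverse x - x * z * inverse x"
      by (simp add: right_diff_distrib left_diff_distrib)
    then show "y - z \<in> ?S" using subring_diff[OF subring y z] by simp
    have "x * (y * z) * inverse x = (x * y * inverse x) * (x * z * inverse x)"
      using x(2) by (simp add: mult.assoc flip: mult.assoc[of "inverse x" x])
    then show "y * z \<in> ?S" using subring_mult[OF subring y z] by simp
  qed
  moreover have "R \<subseteq> ?S" using conjugate_by_mem[OF x] by blast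
  moreover have "?S \<noteq> UNIV"
  proof
    assume "?S = UNIV"
    moreover have "x * (inverse x * y * x) * inverse x = y" for y
      using x(2) by (simp add: mult.assoc mult_inverse_cancel_left)
    ultimately have "R = UNIV" by (metis UNIV_I subsetI subset_antisym mem_Collect_eq)
    then show False using maximal by (simp add: maximal_subring_def)
  qed
  ultimately have "?S = R" by (rule maximal_subringD[OF maximal])
  moreover have "x * (inverse x * t * x) * inverse x \<in> R"
    using x(2) t by (simp add: mult.assoc mult_inverse_cancel_left)
  ultimately show ?thesis by blast
qed

lemma duo: "duo R"
  using right_duoI[OF subring inverse_conjugate_by_mem] left_duo by (simp add: duo_def)

lemma power_mult_mem:
  assumes a: "a \<in> R" "inverse a \<notin> R"
  shows "\<exists>n. a ^ n * d \<in> R"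
proof -
  have comm: "\<forall>t\<in>R. \<exists>t'\<in>R. a ^ i * t = t' * a ^ i" for i
    by (rule power_mult_commute) (use left_duo_mult_commute[OF subring left_duo a(1)] in blast)
  \<comment> \<open>the localization of \<open>R\<close> at the powers of \<open>a\<close>, a ring because \<open>a\<close> normalizes \<open>R\<close>\<close>
  let ?S = "{x. \<exists>n. a ^ n * x \<in> R}"
  have "subring ?S" unfolding subring_def
  proof (intro conjI ballI)
    show "1 \<in> ?S" using subring_one[OF subring] by (auto intro!: exI[of _ 0])
  next
    fix x y assume "x \<in> ?S" "y \<in> ?S"
    then obtain n m where n: "a ^ n * x \<in> R" and m: "a ^ m * y \<in> R" by blast
    have x: "a ^ (n + m) * x = a ^ m * (a ^ n * x)"
      by (metis add.commute power_add mult.assoc)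
    have y: "a ^ (n + m) * y = a ^ n * (a ^ m * y)"
      by (metis power_add mult.assoc)
    have "a ^ (n + m) * (x - y) = a ^ m * (a ^ n * x) - a ^ n * (a ^ m * y)"
      by (simp add: right_diff_distrib x y)
    then have "a ^ (n + m) * (x - y) \<in> R"
      using subring_diff[OF subring] subring_mult[OF subring] subring_power[OF subring a(1)] n m
      by metis
    then show "x - y \<in> ?S" by blast
    obtain z where z: "z \<in> R" "a ^ m * (a ^ n * x) = z * a ^ m" using comm n by blast
    have "a ^ (n + m) * (x * y) = z * (a ^ m * y)"
      using x z by (metis mult.assoc)
    then have "a ^ (n + m) * (x * y) \<in> R" using subring_mult[OF subring] z m by metis
    then show "x * y \<in> ?S" by blast
  qed
  moreover have "R \<subseteq> ?S" by (auto intro!: exI[of _ 0])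
  moreover have "inverse a \<in> ?S"
    using a(2) subring_zero[OF subring] subring_one[OF subring]
    by (cases "a = 0") (auto intro!: exI[of _ 1])
  ultimately have "?S = UNIV" using maximal_subringD[OF maximal] a(2) by blast
  then show ?thesis by blast
qed

lemma nonunits_add:
  assumes x: "x \<in> nonunits R" and y: "y \<in> nonunits R"
  shows "x + y \<in> nonunits R"
proof (rule ccontr)
  assume "x + y \<notin> nonunits R"
  moreover have "x + y \<in> R" using subring_add[OF subring] x y by (simp add: nonunits_def)
  ultimately have "x + y \<noteq> 0" and inv: "inverse (x + y) \<in> R" by (auto simp: nonunits_def)
  define x' where "x' = inverse (x + y) * x"
  define y' where "y' = inverse (x + y) * y"
  have x': "x' \<in> nonunits R" and y': "y' \<in> nonunits R"
    unfolding x'_def y'_def using nonunits_mult_left[OF subring inv] x y by simp_all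
  have sum: "x' + y' = 1"
    unfolding x'_def y'_def using \<open>x + y \<noteq> 0\<close> by (simp flip: distrib_left)
  then have "y' \<noteq> 0" using x' one_not_mem_nonunits[of R] by auto
  then have y'R: "y' \<in> R" "inverse y' \<notin> R" using y' by (auto simp: nonunits_def)
  have "x' \<in> R" "inverse x' \<notin> R"
    using x' sum y' one_not_mem_nonunits[of R] by (auto simp: nonunits_def)
  then obtain n where n: "x' ^ n * inverse y' \<in> R" using power_mult_mem by blast
  obtain q where q: "q \<in> R" "(1 - y') ^ n = 1 - q * y'"
    using one_minus_power_eq[OF subring y'R(1)] by blast
  \<comment> \<open>\<open>x' ^ n = (1 - y') ^ n \<equiv> 1\<close> modulo \<open>R y'\<close>, so \<open>x' ^ n * inverse y' + q \<in> R\<close> inverts \<open>y'\<close>\<close>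
  have "x' = 1 - y'" using sum by (simp add: eq_diff_eq)
  then have "(x' ^ n * inverse y' + q) * y' = (1 - q * y') + q * y'"
    using q(2) \<open>y' \<noteq> 0\<close> by (simp add: distrib_right mult.assoc)
  then have "(x' ^ n * inverse y' + q) * y' = 1" by simp
  then have "inverse y' = x' ^ n * inverse y' + q"
    by (metis inverse_unique inverse_inverse_eq)
  then show False using subring_add[OF subring n q(1)] y'R(2) by simp
qed

lemma nonunits_local_ideal: "local_ideal R (nonunits R)"
  by unfold_locales
    (auto simp: subring nonunits_subset zero_mem_nonunits one_not_mem_nonunits nonunits_add
      nonunits_mult_left[OF subring], auto simp: nonunits_def)

lemma nonunits_left_ideal: "left_ideal_of R (nonunits R)"
  unfolding left_ideal_of_def
  using nonunits_subset zero_mem_nonunits[OF subring] nonunits_add nonunits_uminus[OF subring]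
    nonunits_mult_left[OF subring]
  by (metis diff_conv_add_uminus)

lemma nonunits_ideal: "ideal_of R (nonunits R)"
  using nonunits_left_ideal nonunits_mult_right[OF subring]
  unfolding ideal_of_def left_ideal_of_def right_ideal_of_def by blast

lemma nonunits_ne: "nonunits R \<noteq> R"
  using one_not_mem_nonunits subring_one[OF subring] by blast

lemma Max_l_eq: "Max_l R = {nonunits R}"
  using nonunits_left_ideal nonunits_ne left_ideal_subset_nonunits[OF subring]
  by (rule Max_l_eq_singleton)

lemma Max_r_eq: "Max_r R = {nonunits R}"
  using nonunits_ideal nonunits_ne right_ideal_subset_nonunits[OF subring]
  by (intro Max_r_eq_singleton) (auto simp: ideal_of_def)

lemma Max_two_eq: "Max_two R = {nonunits R}"
  using nonunits_ideal nonunits_ne left_ideal_subset_nonunits[OF subring]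
  by (intro Max_two_eq_singleton) (auto simp: ideal_of_def)

lemma nonunits_prime: "prime_ideal_of R (nonunits R)"
  unfolding prime_ideal_of_def
proof (intro conjI ballI impI nonunits_ideal nonunits_ne)
  fix x y assume x: "x \<in> R" and y: "y \<in> R" and "\<forall>r\<in>R. x * r * y \<in> nonunits R"
  then have "x * y \<in> nonunits R" using subring_one[OF subring] by (metis mult_1_right)
  then show "x \<in> nonunits R \<or> y \<in> nonunits R"
    using x y subring_mult[OF subring]
    by (auto simp: nonunits_def nonzero_inverse_mult_distrib)
qed

lemma prime_ideal_power_mem_imp_mem:
  assumes P: "prime_ideal_of R P" and x: "x \<in> R" "x \<noteq> 0"
  shows "x ^ Suc k \<in> P \<Longrightarrow> x \<in> P"
proof (induction k)
  case (Suc k)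
  have "x * r * x ^ Suc k \<in> P" if r: "r \<in> R" for r
  proof -
    have "(x * r * inverse x) * x ^ Suc (Suc k) = x * r * (inverse x * x) * x ^ Suc k"
      by (simp only: power_Suc[of x "Suc k"] mult.assoc)
    then have "x * r * x ^ Suc k = (x * r * inverse x) * x ^ Suc (Suc k)"
      using x(2) by simp
    then show ?thesis
      using P Suc.prems conjugate_by_mem[OF x r]
      unfolding prime_ideal_of_def ideal_of_def left_ideal_of_def by simp
  qed
  then have "x \<in> P \<or> x ^ Suc k \<in> P"
    using P x(1) subring_power[OF subring x(1)] unfolding prime_ideal_of_def by blast
  then show ?case using Suc.IH by blast
qed simp

lemma prime_ideal_eq_nonunits:
  assumes P: "prime_ideal_of R P" and "P \<noteq> {0}"
  shows "P = nonunits R"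
proof
  have P_left: "left_ideal_of R P" and "P \<noteq> R"
    using P unfolding prime_ideal_of_def ideal_of_def by auto
  then show "P \<subseteq> nonunits R" by (rule left_ideal_subset_nonunits[OF subring])
  show "nonunits R \<subseteq> P"
  proof
    fix x assume "x \<in> nonunits R"
    show "x \<in> P"
    proof (cases "x = 0")
      case True
      then show ?thesis using P_left by (simp add: left_ideal_of_def)
    next
      case False
      then have x: "x \<in> R" "inverse x \<notin> R" using \<open>x \<in> nonunits R\<close> by (auto simp: nonunits_def)
      obtain p where p: "p \<in> P" "p \<noteq> 0" using \<open>P \<noteq> {0}\<close> P_left by (auto simp: left_ideal_of_def)
      obtain n where "x ^ n * inverse p \<in> R" using power_mult_mem[OF x] by blast
      then have "(x ^ n * inverse p) * p \<in> P" using P_left p(1) by (simp add: left_ideal_of_def)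
      then have xn: "x ^ n \<in> P" using p(2) by (simp add: mult.assoc)
      have "n \<noteq> 0"
        using xn \<open>P \<noteq> R\<close> P_left subring_one[OF subring] by (force simp: left_ideal_of_def)
      then show ?thesis
        using prime_ideal_power_mem_imp_mem[OF P x(1) False] xn by (metis not0_implies_Suc)
    qed
  qed
qed

end

locale nondivision_maximal_left_duo = maximal_left_duo +
  assumes not_division: "\<not> is_division_subring R"
begin

lemma nonunit_exists:
  obtains a where "a \<in> R" "inverse a \<notin> R" "a \<noteq> 0"
  using not_division subring by (auto simp: is_division_subring_def)

lemma conjugate_mem:
  assumes d: "d \<noteq> 0" and t: "t \<in> R"
  shows "d * t * inverse d \<in> R"
proof -
  obtain a where a: "a \<in> R" "inverse a \<notin> R" "a \<noteq> 0" by (rule nonunit_exists)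
  then obtain n where b: "a ^ n * d \<in> R" using power_mult_mem by blast
  define c where "c = a ^ n"
  have c: "c \<in> R" "c \<noteq> 0" unfolding c_def using subring_power[OF subring a(1)] a(3) by auto
  \<comment> \<open>\<open>d = inverse c * (c * d)\<close> with \<open>c\<close> and \<open>c * d\<close> in \<open>R\<close>\<close>
  have "inverse c * ((c * d) * t * inverse (c * d)) * c
      = (inverse c * c) * (d * t * inverse d) * (inverse c * c)"
    using nonzero_inverse_mult_distrib[OF c(2) d] by (simp only: mult.assoc)
  also have "\<dots> = d * t * inverse d" using c(2) by simp
  finally show ?thesis
    using inverse_conjugate_by_mem[OF c conjugate_by_mem[OF b _ t]] d c(2) unfolding c_def by simp
qed

lemma conjugate_image: "d \<noteq> 0 \<Longrightarrow> (\<lambda>x. d * x * inverse d) ` R = R"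
  using conjugate_mem conjugate_mem[of "inverse d"] by (intro conjugation_image_eq) auto

lemma conjugate_nonunits_mem:
  assumes d: "d \<noteq> 0" and m: "m \<in> nonunits R"
  shows "d * m * inverse d \<in> nonunits R"
proof (rule ccontr)
  have "m \<in> R" using m by (simp add: nonunits_def)
  then have "d * m * inverse d \<in> R" using conjugate_mem[OF d] by blast
  moreover assume "d * m * inverse d \<notin> nonunits R"
  ultimately have "m \<noteq> 0" "inverse (d * m * inverse d) \<in> R" by (auto simp: nonunits_def)
  moreover have "inverse (d * m * inverse d) = d * inverse m * inverse d"
    using d \<open>m \<noteq> 0\<close> by (simp add: nonzero_inverse_mult_distrib mult.assoc)
  ultimately have "inverse d * (d * inverse m * inverse d) * inverse (inverse d) \<in> R"
    using conjugate_mem[of "inverse d"] d by simp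
  then have "inverse m \<in> R" using d by (simp add: mult.assoc inverse_mult_cancel_left)
  then show False using m \<open>m \<noteq> 0\<close> by (simp add: nonunits_def)
qed

lemma conjugate_nonunits_image: "d \<noteq> 0 \<Longrightarrow> (\<lambda>x. d * x * inverse d) ` nonunits R = nonunits R"
  using conjugate_nonunits_mem conjugate_nonunits_mem[of "inverse d"]
  by (intro conjugation_image_eq) auto

lemma one_mem_polys_upto_nonunits:
  assumes y: "y \<noteq> 0" "y \<notin> R"
  shows "\<exists>n. 1 \<in> polys_upto (nonunits R) y n"
proof -
  have "y * t = (y * t * inverse y) * y" for t
    using y(1) by (simp add: mult.assoc)
  then have "\<forall>t\<in>R. \<exists>t'\<in>R. y * t = t' * y"
    using conjugate_mem[OF y(1)] by blast
  then have "subring (polys R y)" by (rule polys_subring[OF subring])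
  moreover have "R \<subseteq> polys R y"
    using polys_upto_monom[OF subring_zero[OF subring], of _ 0 0 y]
    by (simp add: mem_polys subset_iff) blast
  moreover have "y \<in> polys R y"
    using polys_upto_monom[OF subring_zero[OF subring] subring_one[OF subring], of 1 1 y]
    by (auto simp: mem_polys)
  ultimately have "polys R y = UNIV" using maximal_subringD[OF maximal] y(2) by blast
  obtain a where a: "a \<in> R" "inverse a \<notin> R" "a \<noteq> 0" by (rule nonunit_exists)
  then obtain n where "inverse a \<in> polys_upto R y n"
    using \<open>polys R y = UNIV\<close> by (metis UNIV_I mem_polys)
  moreover have "a \<in> nonunits R" using a by (simp add: nonunits_def)
  ultimately have "a * inverse a \<in> polys_upto (nonunits R) y n"
    using nonunits_mult_right[OF subring] by (intro polys_upto_mult_left) auto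
  then show ?thesis using a(3) by auto
qed

lemma valuation_ring: "valuation_ring_for R"
  unfolding valuation_ring_for_def
proof (intro allI impI)
  fix x :: 'a assume x: "x \<noteq> 0"
  show "x \<in> R \<or> inverse x \<in> R"
  proof (rule ccontr)
    assume "\<not> ?thesis"
    then obtain n k where "1 \<in> polys_upto (nonunits R) x n"
      and "1 \<in> polys_upto (nonunits R) (inverse x) k"
      using one_mem_polys_upto_nonunits[of x] one_mem_polys_upto_nonunits[of "inverse x"] x
      by auto
    then show False
      using local_ideal.not_one_mem_polys_upto_both[OF nonunits_local_ideal x]
        conjugate_nonunits_mem[OF x] conjugate_nonunits_mem[of "inverse x"] x
      by simp
  qed
qed

lemma nonunits_ne_zero: "nonunits R \<noteq> {0}"
proof -
  obtain a where "a \<in> R" "inverse a \<notin> R" "a \<noteq> 0" by (rule nonunit_exists)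
  then have "a \<in> nonunits R" "a \<noteq> 0" by (simp_all add: nonunits_def)
  then show ?thesis by blast
qed

lemma nonzero_prime_ideals: "{P. prime_ideal_of R P \<and> P \<noteq> {0}} = {nonunits R}"
  using prime_ideal_eq_nonunits nonunits_prime nonunits_ne_zero by blast

lemma Ore_domain: "Ore_domain R"
  using subring valuation_ring_left_Ore[OF subring valuation_ring]
    valuation_ring_right_Ore[OF subring valuation_ring]
  by (simp add: Ore_domain_def domain_sub_def)

lemma G_domain: "G_domain R"
  using Ore_domain nonunits_ne_zero
  by (simp add: G_domain_def Ore_domain_def nonzero_prime_ideals Int_absorb1[OF nonunits_subset])

end

theorem proposition3p2:
  fixes R :: "'a::division_ring set"
  assumes "maximal_subring R" and "left_duo R"
  defines "M \<equiv> R - units_of_sub R"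
  shows "duo R \<and>
    (is_division_subring R \<or>
      (Ore_domain R \<and> G_domain R \<and> {P. prime_ideal_of R P \<and> P \<noteq> {0}} = {M})) \<and>
    (\<not> is_division_subring R \<longrightarrow>
      valuation_ring_for R \<and>
      Max_l R = Max_r R \<and> Max_r R = Max_two R \<and> Max_two R = Spec_sub R - {{0}} \<and>
      Spec_sub R - {{0}} = {M} \<and>
      (\<forall>d. d \<noteq> 0 \<longrightarrow> (\<lambda>x. d * x * inverse d) ` R = R \<and> (\<lambda>x. d * x * inverse d) ` M = M))"
proof -
  interpret maximal_left_duo R by unfold_locales fact+
  have M: "M = nonunits R" unfolding M_def by (rule Diff_units_of_sub)
  have Spec: "Spec_sub R - {{0}} = {P. prime_ideal_of R P \<and> P \<noteq> {0}}"
    by (auto simp: Spec_sub_def)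
  have nondivision: "Ore_domain R \<and> G_domain R \<and> {P. prime_ideal_of R P \<and> P \<noteq> {0}} = {M} \<and>
      valuation_ring_for R \<and> (\<forall>d. d \<noteq> 0 \<longrightarrow>
        (\<lambda>x. d * x * inverse d) ` R = R \<and> (\<lambda>x. d * x * inverse d) ` M = M)"
    if "\<not> is_division_subring R"
  proof -
    interpret nondivision_maximal_left_duo R by unfold_locales fact
    show ?thesis
      using Ore_domain G_domain nonzero_prime_ideals valuation_ring conjugate_image
        conjugate_nonunits_image M by simp
  qed
  show ?thesis
    unfolding Max_l_eq Max_r_eq Max_two_eq Spec M using duo nondivision[unfolded M]
    by (cases "is_division_subring R") simp_all
qed

end
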